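(* Let $a_n=\min(\sqrt{n},\,n/\lambda^* )$ (with $n/0:=\infty$). Then for every fixed $\beta\in\mathbb{R}^p$ and every $\delta>0$ there exists a real number $M$ such that $$\sup_{n\in\mathbb{N}}P_\beta\big(a_n\|\hat\beta_{AL}-\beta\|>M\big)\le\delta.$$
   Context: For each $n\ge p$: linear regression model $y=X\beta+\varepsilon$ with $y\in\mathbb{R}^n$, non-stochastic $X\in\mathbb{R}^{n\times p}$ ($p$ fixed) of full column rank, unknown $\beta\in\mathbb{R}^p$, and $\varepsilon$ with i.i.d. components of mean zero and finite variance $\sigma^2>0$; $P_\beta$ is the probability when the true parameter is $\beta$. $X'X/n\to C$ positive definite as $n\to\infty$. $\hat\beta_{LS}=(X'X)^{-1}X'y$; the events $\{\hat\beta_{LS,j}=0\}$ have probability zero and are excluded. Non-negative tuning parameters $\lambda_j=\lambda_{n,j}$, $\lambda^*=\max_j\lambda_j$. Adaptive Lasso: $\hat\beta_{AL}=\arg\min_{b\in\mathbb{R}^p}\big(\|y-Xb\|^2+2\sum_{j=1}^p\lambda_j|b_j|/|\hat\beta_{LS,j}|\big)$. *)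

theory Defs
  imports "HOL-Probability.Probability"
begin

text \<open>Design: for sample size n, the design matrix has rows X n i (i < n),
  each a vector in R^p (p = CARD('p)). Errors: eps i, i = 0,1,2,...;
  the sample of size n uses eps 0, ..., eps (n-1).\<close>

definition gram :: "(nat \<Rightarrow> real^'p) \<Rightarrow> nat \<Rightarrow> real^'p^'p" where
  "gram Xn n = (\<chi> j k. \<Sum>i<n. Xn i $ j * Xn i $ k)"

definition Xty :: "(nat \<Rightarrow> real^'p) \<Rightarrow> nat \<Rightarrow> (nat \<Rightarrow> real) \<Rightarrow> real^'p" where
  "Xty Xn n y = (\<chi> j. \<Sum>i<n. Xn i $ j * y i)"

definition beta_LS :: "(nat \<Rightarrow> real^'p) \<Rightarrow> nat \<Rightarrow> (nat \<Rightarrow> real) \<Rightarrow> real^'p" where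
  "beta_LS Xn n y = matrix_inv (gram Xn n) *v Xty Xn n y"

definition AL_obj :: "(nat \<Rightarrow> real^'p) \<Rightarrow> nat \<Rightarrow> ('p \<Rightarrow> real) \<Rightarrow> (nat \<Rightarrow> real) \<Rightarrow> real^'p \<Rightarrow> real" where
  "AL_obj Xn n lam y b =
     (\<Sum>i<n. (y i - Xn i \<bullet> b)\<^sup>2)
     + 2 * (\<Sum>j\<in>UNIV. lam j * \<bar>b $ j\<bar> / \<bar>beta_LS Xn n y $ j\<bar>)"

definition beta_AL :: "(nat \<Rightarrow> real^'p) \<Rightarrow> nat \<Rightarrow> ('p \<Rightarrow> real) \<Rightarrow> (nat \<Rightarrow> real) \<Rightarrow> real^'p" where
  "beta_AL Xn n lam y = (ARG_MIN (AL_obj Xn n lam y) b. True)"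

definition resp :: "(nat \<Rightarrow> real^'p) \<Rightarrow> real^'p \<Rightarrow> (nat \<Rightarrow> 'a \<Rightarrow> real) \<Rightarrow> 'a \<Rightarrow> nat \<Rightarrow> real" where
  "resp Xn beta eps \<omega> i = Xn i \<bullet> beta + eps i \<omega>"

definition lam_max :: "('p::finite \<Rightarrow> real) \<Rightarrow> real" where
  "lam_max lam = Max (range lam)"

definition rate :: "nat \<Rightarrow> real \<Rightarrow> real" where
  "rate n lm = (if lm = 0 then sqrt (real n) else min (sqrt (real n)) (real n / lm))"

end

theory Submission
  imports Defs
begin

text \<open>Write \<open>Z = X'\<epsilon>\<close>. Since \<open>X'X/n \<rightarrow> C > 0\<close>, the Gram matrix satisfies
  \<open>v'X'Xv \<ge> c n |v|\<^sup>2\<close> for all \<open>n \<ge> p\<close>, so the least squares error is at most \<open>|Z|/(c n)\<close>.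
  Comparing the adaptive Lasso objective at its minimiser \<open>b\<close> and at \<open>\<beta>\<close> gives
  \<open>c n |b - \<beta>|\<^sup>2 \<le> 2 Z'(b - \<beta>) + 2 p (\<lambda>*/\<eta>) |b - \<beta>|\<close> whenever every least squares
  component belonging to a nonzero \<open>\<beta>\<^sub>j\<close> has modulus at least \<open>\<eta>\<close>; hence
  \<open>a\<^sub>n |b - \<beta>| \<le> (2 |Z|/\<surd>n + 2 p/\<eta>)/c\<close>.
  By Chebyshev, \<open>|Z|/\<surd>n\<close> is bounded in probability. For large \<open>n\<close> least squares is
  consistent, which keeps its relevant components away from zero; for the finitely many
  remaining \<open>n\<close> the same follows from the components being nonzero almost surely.\<close>

lemma inner_gram_mult: "v \<bullet> (gram Xn n *v v) = (\<Sum>i<n. (Xn i \<bullet> v)\<^sup>2)"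
proof -
  have "v \<bullet> (gram Xn n *v v) = (\<Sum>j\<in>UNIV. v $ j * (\<Sum>k\<in>UNIV. (\<Sum>i<n. Xn i $ j * Xn i $ k) * v $ k))"
    unfolding gram_def matrix_vector_mult_def inner_vec_def by simp
  also have "\<dots> = (\<Sum>j\<in>UNIV. \<Sum>k\<in>UNIV. \<Sum>i<n. (Xn i $ j * v $ j) * (Xn i $ k * v $ k))"
    by (simp add: sum_distrib_left sum_distrib_right mult.assoc mult.left_commute)
  also have "\<dots> = (\<Sum>i<n. \<Sum>j\<in>UNIV. \<Sum>k\<in>UNIV. (Xn i $ j * v $ j) * (Xn i $ k * v $ k))"
    by (subst sum.swap, rule sum.cong, rule refl, rule sum.swap)
  also have "\<dots> = (\<Sum>i<n. (Xn i \<bullet> v)\<^sup>2)"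
    unfolding inner_vec_def power2_eq_square by (simp add: sum_product)
  finally show ?thesis .
qed

lemma Xty_resp: "Xty Xn n (resp Xn b eps \<omega>) = gram Xn n *v b + Xty Xn n (\<lambda>i. eps i \<omega>)"
proof -
  have "\<And>j. (\<Sum>i<n. Xn i $ j * (\<Sum>k\<in>UNIV. Xn i $ k * b $ k + 0))
      = (\<Sum>k\<in>UNIV. (\<Sum>i<n. Xn i $ j * Xn i $ k) * b $ k)"
    by (simp add: sum_distrib_left sum_distrib_right mult.assoc, rule sum.swap)
  then show ?thesis
    unfolding Xty_def gram_def resp_def matrix_vector_mult_def inner_vec_def
    by (simp add: vec_eq_iff distrib_left sum.distrib)
qed

lemma Xty_inner: "Xty Xn n y \<bullet> d = (\<Sum>i<n. y i * (Xn i \<bullet> d))"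
  unfolding Xty_def inner_vec_def
  by (simp add: sum_distrib_left sum_distrib_right mult_ac, rule sum.swap)

lemma norm_Xty_power2: "(norm (Xty Xn n y))\<^sup>2 = (\<Sum>j\<in>UNIV. (\<Sum>i<n. Xn i $ j * y i)\<^sup>2)"
  unfolding power2_norm_eq_inner Xty_def inner_vec_def by (simp add: power2_eq_square)

lemma abs_quadratic_form_le:
  fixes D :: "real^'n^'n"
  shows "\<bar>v \<bullet> (D *v v)\<bar> \<le> (\<Sum>i\<in>UNIV. \<Sum>j\<in>UNIV. \<bar>D $ i $ j\<bar>) * (norm v)\<^sup>2"
proof -
  have "norm (D *v v) \<le> onorm ((*v) D) * norm v" by (rule onorm) simp
  also have "\<dots> \<le> (\<Sum>i\<in>UNIV. \<Sum>j\<in>UNIV. \<bar>D $ i $ j\<bar>) * norm v"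
    by (rule mult_right_mono[OF onorm_le_matrix_component_sum]) simp
  finally have "norm v * norm (D *v v) \<le> norm v * ((\<Sum>i\<in>UNIV. \<Sum>j\<in>UNIV. \<bar>D $ i $ j\<bar>) * norm v)"
    by (rule mult_left_mono) simp
  with Cauchy_Schwarz_ineq2[of v "D *v v"] show ?thesis
    by (simp add: power2_eq_square mult_ac)
qed

lemma quadratic_form_coercive:
  fixes A :: "real^'n^'n"
  assumes pd: "\<And>v. v \<noteq> 0 \<Longrightarrow> v \<bullet> (A *v v) > 0"
  shows "\<exists>\<mu>>0. \<forall>v. \<mu> * (norm v)\<^sup>2 \<le> v \<bullet> (A *v v)"
proof -
  have cont: "continuous_on (sphere 0 1) (\<lambda>v. v \<bullet> (A *v v))"
    by (intro continuous_intros linear_continuous_on) simp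
  have ne: "sphere (0::real^'n) 1 \<noteq> {}"
    by (metis norm_axis_1 mem_sphere_0 empty_iff)
  obtain u where u: "u \<in> sphere 0 1"
    and umin: "\<And>w. w \<in> sphere 0 1 \<Longrightarrow> u \<bullet> (A *v u) \<le> w \<bullet> (A *v w)"
    using continuous_attains_inf[OF compact_sphere ne cont] by blast
  have pos: "u \<bullet> (A *v u) > 0" using u by (intro pd) auto
  have "u \<bullet> (A *v u) * (norm v)\<^sup>2 \<le> v \<bullet> (A *v v)" for v
  proof (cases "v = 0")
    case False
    define w where "w = (1 / norm v) *\<^sub>R v"
    have "u \<bullet> (A *v u) \<le> w \<bullet> (A *v w)" using False by (intro umin) (simp add: w_def)
    also have "w \<bullet> (A *v w) = (v \<bullet> (A *v v)) / (norm v)\<^sup>2"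
      by (simp add: w_def matrix_vector_mult_scaleR power2_eq_square)
    finally show ?thesis using False by (simp add: field_simps)
  qed simp
  with pos show ?thesis by blast
qed

lemma gram_coercive:
  fixes Xn :: "nat \<Rightarrow> real^'p::finite"
  assumes full_rank: "\<And>b. \<forall>i<n. Xn i \<bullet> b = 0 \<Longrightarrow> b = 0"
  shows "\<exists>\<mu>>0. \<forall>v. \<mu> * (norm v)\<^sup>2 \<le> (\<Sum>i<n. (Xn i \<bullet> v)\<^sup>2)"
proof -
  have "v \<bullet> (gram Xn n *v v) > 0" if "v \<noteq> 0" for v
  proof -
    have "\<not> (\<forall>i<n. Xn i \<bullet> v = 0)" using full_rank that by blast
    then have "(\<Sum>i<n. (Xn i \<bullet> v)\<^sup>2) \<noteq> 0" by (auto simp: sum_nonneg_eq_0_iff)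
    moreover have "(\<Sum>i<n. (Xn i \<bullet> v)\<^sup>2) \<ge> 0" by (simp add: sum_nonneg)
    ultimately show ?thesis by (simp add: inner_gram_mult)
  qed
  from quadratic_form_coercive[OF this] show ?thesis by (simp add: inner_gram_mult)
qed

lemma design_uniformly_coercive:
  fixes X :: "nat \<Rightarrow> nat \<Rightarrow> real^'p::finite" and C :: "real^'p^'p"
  assumes full_rank: "\<And>n b. n \<ge> CARD('p) \<Longrightarrow> \<forall>i<n. X n i \<bullet> b = 0 \<Longrightarrow> b = 0"
    and gram_limit: "(\<lambda>n. (1 / real n) *\<^sub>R gram (X n) n) \<longlonglongrightarrow> C"
    and limit_pos_def: "\<And>v. v \<noteq> 0 \<Longrightarrow> v \<bullet> (C *v v) > 0"
  shows "\<exists>c>0. \<forall>n\<ge>CARD('p). \<forall>v. c * real n * (norm v)\<^sup>2 \<le> (\<Sum>i<n. (X n i \<bullet> v)\<^sup>2)"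
proof -
  obtain \<mu> where \<mu>: "\<mu> > 0" "\<And>v. \<mu> * (norm v)\<^sup>2 \<le> v \<bullet> (C *v v)"
    using quadratic_form_coercive[OF limit_pos_def] by blast
  define A where "A n = (1 / real n) *\<^sub>R gram (X n) n" for n
  have "(\<lambda>n. \<Sum>i\<in>UNIV. \<Sum>j\<in>UNIV. \<bar>(A n - C) $ i $ j\<bar>) \<longlonglongrightarrow> (\<Sum>i\<in>UNIV. \<Sum>j\<in>UNIV. \<bar>(C - C) $ i $ j\<bar>)"
    unfolding A_def by (intro tendsto_intros gram_limit)
  then have "eventually (\<lambda>n. (\<Sum>i\<in>UNIV. \<Sum>j\<in>UNIV. \<bar>(A n - C) $ i $ j\<bar>) < \<mu>/2) sequentially"
    using \<mu>(1) by (intro order_tendstoD(2)) auto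
  then obtain N where N: "\<And>n. n \<ge> N \<Longrightarrow> (\<Sum>i\<in>UNIV. \<Sum>j\<in>UNIV. \<bar>(A n - C) $ i $ j\<bar>) < \<mu>/2"
    unfolding eventually_sequentially by blast
  have large: "\<mu>/2 * real n * (norm v)\<^sup>2 \<le> (\<Sum>i<n. (X n i \<bullet> v)\<^sup>2)" if "n \<ge> N" "n \<ge> 1" for n v
  proof -
    have "\<bar>v \<bullet> ((A n - C) *v v)\<bar> \<le> (\<Sum>i\<in>UNIV. \<Sum>j\<in>UNIV. \<bar>(A n - C) $ i $ j\<bar>) * (norm v)\<^sup>2"
      by (rule abs_quadratic_form_le)
    also have "\<dots> \<le> \<mu>/2 * (norm v)\<^sup>2"
      using N[OF that(1)] by (intro mult_right_mono) auto
    finally have "\<bar>v \<bullet> ((A n - C) *v v)\<bar> \<le> \<mu>/2 * (norm v)\<^sup>2" .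
    moreover have "v \<bullet> (A n *v v) = v \<bullet> (C *v v) + v \<bullet> ((A n - C) *v v)"
      by (simp add: matrix_vector_mult_diff_rdistrib inner_diff_right)
    ultimately have "\<mu>/2 * (norm v)\<^sup>2 \<le> v \<bullet> (A n *v v)" using \<mu>(2)[of v] by linarith
    moreover have "v \<bullet> (A n *v v) = (\<Sum>i<n. (X n i \<bullet> v)\<^sup>2) / real n"
      unfolding A_def by (simp add: scaleR_matrix_vector_assoc[symmetric] inner_gram_mult)
    ultimately show ?thesis using that(2) by (simp add: field_simps)
  qed
  have "\<forall>n. \<exists>\<mu>. n \<ge> CARD('p) \<longrightarrow> \<mu> > 0 \<and> (\<forall>v. \<mu> * (norm v)\<^sup>2 \<le> (\<Sum>i<n. (X n i \<bullet> v)\<^sup>2))"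
    using gram_coercive full_rank by metis
  then obtain f where f: "\<And>n v. n \<ge> CARD('p) \<Longrightarrow> f n > 0 \<and> f n * (norm v)\<^sup>2 \<le> (\<Sum>i<n. (X n i \<bullet> v)\<^sup>2)"
    by metis
  define c where "c = Min (insert (\<mu>/2) ((\<lambda>n. f n / real n) ` {CARD('p)..<N}))"
  have pos: "n \<ge> CARD('p) \<Longrightarrow> n > 0" for n
    using zero_less_card_finite[where 'a='p] by linarith
  have "c > 0" unfolding c_def using \<mu>(1) f pos by (auto intro!: divide_pos_pos)
  moreover have "c * real n * (norm v)\<^sup>2 \<le> (\<Sum>i<n. (X n i \<bullet> v)\<^sup>2)" if n: "n \<ge> CARD('p)" for n v
  proof (cases "n \<ge> N")
    case True
    have "c \<le> \<mu>/2" unfolding c_def by (rule Min_le) auto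
    then have "c * real n * (norm v)\<^sup>2 \<le> \<mu>/2 * real n * (norm v)\<^sup>2" by (intro mult_right_mono) auto
    also have "\<dots> \<le> (\<Sum>i<n. (X n i \<bullet> v)\<^sup>2)" using large True pos[OF n] by simp
    finally show ?thesis .
  next
    case False
    then have "c \<le> f n / real n" unfolding c_def using n by (intro Min_le) auto
    then have "c * real n \<le> f n" using pos[OF n] by (simp add: field_simps)
    then have "c * real n * (norm v)\<^sup>2 \<le> f n * (norm v)\<^sup>2" by (intro mult_right_mono) auto
    also have "\<dots> \<le> (\<Sum>i<n. (X n i \<bullet> v)\<^sup>2)" using f[OF n] by blast
    finally show ?thesis .
  qed
  ultimately show ?thesis by blast
qed

lemma design_sum_squares_bounded:
  fixes X :: "nat \<Rightarrow> nat \<Rightarrow> real^'p::finite" and C :: "real^'p^'p"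
  assumes gram_limit: "(\<lambda>n. (1 / real n) *\<^sub>R gram (X n) n) \<longlonglongrightarrow> C"
  shows "\<exists>B>0. \<forall>n\<ge>1. (\<Sum>j\<in>UNIV. \<Sum>i<n. (X n i $ j)\<^sup>2) \<le> B * real n"
proof -
  have "Bseq (\<lambda>n. (1 / real n) *\<^sub>R gram (X n) n)"
    using gram_limit by (intro convergent_imp_Bseq) (auto simp: convergent_def)
  then obtain K where K: "K > 0" "\<And>n. norm ((1 / real n) *\<^sub>R gram (X n) n) \<le> K"
    by (auto elim: BseqE)
  have "(\<Sum>i<n. (X n i $ j)\<^sup>2) \<le> K * real n" if n: "n \<ge> 1" for n j
  proof -
    have "\<bar>((1 / real n) *\<^sub>R gram (X n) n) $ j $ j\<bar> \<le> norm ((1 / real n) *\<^sub>R gram (X n) n)"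
      by (rule order_trans[OF component_le_norm_cart Finite_Cartesian_Product.norm_nth_le])
    also have "\<dots> \<le> K" by (rule K)
    finally have "\<bar>((1 / real n) *\<^sub>R gram (X n) n) $ j $ j\<bar> \<le> K" .
    moreover have "((1 / real n) *\<^sub>R gram (X n) n) $ j $ j = (\<Sum>i<n. (X n i $ j)\<^sup>2) / real n"
      unfolding gram_def by (simp add: power2_eq_square)
    ultimately have "(\<Sum>i<n. (X n i $ j)\<^sup>2) / real n \<le> K" by (metis abs_ge_self order_trans)
    then show ?thesis using n by (simp add: field_simps)
  qed
  then have "(\<Sum>j\<in>UNIV. \<Sum>i<n. (X n i $ j)\<^sup>2) \<le> real CARD('p) * K * real n" if "n \<ge> 1" for n
    using sum_mono[of UNIV "\<lambda>j. \<Sum>i<n. (X n i $ j)\<^sup>2" "\<lambda>_. K * real n"] that by simp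
  with K(1) show ?thesis by (intro exI[of _ "real CARD('p) * K"]) simp
qed

lemma gram_invertible:
  fixes Xn :: "nat \<Rightarrow> real^'p::finite"
  assumes "\<kappa> > 0" and coercive: "\<And>v. \<kappa> * (norm v)\<^sup>2 \<le> (\<Sum>i<n. (Xn i \<bullet> v)\<^sup>2)"
  shows "invertible (gram Xn n)"
proof -
  have "x = 0" if "gram Xn n *v x = 0" for x
  proof -
    have "\<kappa> * (norm x)\<^sup>2 \<le> 0" using coercive[of x] inner_gram_mult[of x Xn n] that by simp
    with \<open>\<kappa> > 0\<close> show "x = 0" by (simp add: mult_le_0_iff)
  qed
  then show ?thesis unfolding invertible_left_inverse matrix_left_invertible_ker by blast
qed

lemma matrix_inv_mult_cancel:
  fixes A :: "real^'n^'n"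
  assumes "invertible A"
  shows "A ** matrix_inv A = mat 1" "matrix_inv A ** A = mat 1"
proof -
  have "\<exists>A'. A ** A' = mat 1 \<and> A' ** A = mat 1" using assms unfolding invertible_def by blast
  then have "A ** matrix_inv A = mat 1 \<and> matrix_inv A ** A = mat 1"
    unfolding matrix_inv_def by (rule someI_ex)
  then show "A ** matrix_inv A = mat 1" "matrix_inv A ** A = mat 1" by auto
qed

lemma beta_LS_resp:
  fixes Xn :: "nat \<Rightarrow> real^'p::finite"
  assumes "\<kappa> > 0" and coercive: "\<And>v. \<kappa> * (norm v)\<^sup>2 \<le> (\<Sum>i<n. (Xn i \<bullet> v)\<^sup>2)"
  shows "beta_LS Xn n (resp Xn \<beta> eps \<omega>) = \<beta> + matrix_inv (gram Xn n) *v Xty Xn n (\<lambda>i. eps i \<omega>)"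
  using matrix_inv_mult_cancel[OF gram_invertible[OF assms]]
  unfolding beta_LS_def Xty_resp
  by (simp add: matrix_vector_right_distrib matrix_vector_mul_assoc)

lemma beta_LS_error_le:
  fixes Xn :: "nat \<Rightarrow> real^'p::finite"
  assumes "\<kappa> > 0" and coercive: "\<And>v. \<kappa> * (norm v)\<^sup>2 \<le> (\<Sum>i<n. (Xn i \<bullet> v)\<^sup>2)"
  shows "\<kappa> * norm (beta_LS Xn n (resp Xn \<beta> eps \<omega>) - \<beta>) \<le> norm (Xty Xn n (\<lambda>i. eps i \<omega>))"
proof -
  define Z where "Z = Xty Xn n (\<lambda>i. eps i \<omega>)"
  define e where "e = matrix_inv (gram Xn n) *v Z"
  have "\<kappa> * (norm e)\<^sup>2 \<le> e \<bullet> (gram Xn n *v e)" using coercive[of e] by (simp add: inner_gram_mult)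
  also have "\<dots> = e \<bullet> Z"
    using matrix_inv_mult_cancel[OF gram_invertible[OF assms]]
    unfolding e_def by (simp add: matrix_vector_mul_assoc)
  also have "\<dots> \<le> norm e * norm Z" by (rule norm_cauchy_schwarz)
  finally have "(\<kappa> * norm e) * norm e \<le> norm Z * norm e" by (simp add: power2_eq_square mult_ac)
  then have "\<kappa> * norm e \<le> norm Z"
    by (cases "e = 0") (simp_all add: mult_le_cancel_right)
  then show ?thesis unfolding beta_LS_resp[OF assms] e_def Z_def by simp
qed

lemma beta_LS_error_le_if_noise_le:
  fixes Xn :: "nat \<Rightarrow> real^'p::finite"
  assumes "c > 0" "n > 0" "r > 0" "(T / (c * r))\<^sup>2 \<le> real n"
    and coercive: "\<And>v. c * real n * (norm v)\<^sup>2 \<le> (\<Sum>i<n. (Xn i \<bullet> v)\<^sup>2)"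
    and noise_le: "norm (Xty Xn n (\<lambda>i. eps i \<omega>)) \<le> T * sqrt (real n)"
  shows "norm (beta_LS Xn n (resp Xn \<beta> eps \<omega>) - \<beta>) \<le> r"
proof -
  have "T / (c * r) \<le> sqrt (real n)" using assms(4) by (rule real_le_rsqrt)
  then have "T \<le> c * r * sqrt (real n)"
    using \<open>c > 0\<close> \<open>r > 0\<close> by (simp add: divide_le_eq mult_ac)
  then have "T * sqrt (real n) \<le> c * r * sqrt (real n) * sqrt (real n)"
    by (rule mult_right_mono) simp
  then have "T * sqrt (real n) \<le> c * real n * r" by (simp add: mult_ac)
  moreover have "c * real n * norm (beta_LS Xn n (resp Xn \<beta> eps \<omega>) - \<beta>) \<le> norm (Xty Xn n (\<lambda>i. eps i \<omega>))"
    using \<open>c > 0\<close> \<open>n > 0\<close> coercive by (intro beta_LS_error_le) simp_all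
  ultimately have "c * real n * norm (beta_LS Xn n (resp Xn \<beta> eps \<omega>) - \<beta>) \<le> c * real n * r"
    using noise_le by linarith
  then show ?thesis using \<open>c > 0\<close> \<open>n > 0\<close> by (simp add: mult_le_cancel_left_pos)
qed

text \<open>The definition of \<open>beta_AL\<close> is an \<open>ARG_MIN\<close>, so we must show that a
  minimiser exists: the objective is continuous and grows quadratically.\<close>
lemma AL_obj_beta_AL_le:
  fixes Xn :: "nat \<Rightarrow> real^'p::finite"
  assumes "\<kappa> > 0" and coercive: "\<And>v. \<kappa> * (norm v)\<^sup>2 \<le> (\<Sum>i<n. (Xn i \<bullet> v)\<^sup>2)"
    and lam_nonneg: "\<And>j. lam j \<ge> 0"
  shows "AL_obj Xn n lam y (beta_AL Xn n lam y) \<le> AL_obj Xn n lam y b"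
proof -
  define F where "F = AL_obj Xn n lam y"
  define Y where "Y = (\<Sum>i<n. (y i)\<^sup>2)"
  have growth: "\<kappa> / 2 * (norm b)\<^sup>2 - Y \<le> F b" for b
  proof -
    have "(x - u)\<^sup>2 \<ge> u\<^sup>2 / 2 - x\<^sup>2" for x u :: real
      using zero_le_power2[of "x - u/2"] by (simp add: power2_eq_square field_simps)
    then have "(\<Sum>i<n. (Xn i \<bullet> b)\<^sup>2 / 2 - (y i)\<^sup>2) \<le> (\<Sum>i<n. (y i - Xn i \<bullet> b)\<^sup>2)"
      by (intro sum_mono)
    moreover have "(\<Sum>i<n. (Xn i \<bullet> b)\<^sup>2 / 2 - (y i)\<^sup>2) = (\<Sum>i<n. (Xn i \<bullet> b)\<^sup>2) / 2 - Y"
      unfolding Y_def by (simp add: sum_subtractf sum_divide_distrib)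
    moreover have "(\<Sum>j\<in>UNIV. lam j * \<bar>b $ j\<bar> / \<bar>beta_LS Xn n y $ j\<bar>) \<ge> 0"
      using lam_nonneg by (intro sum_nonneg) simp
    ultimately show ?thesis using coercive[of b] unfolding F_def AL_obj_def by linarith
  qed
  define R where "R = sqrt (2 * (\<bar>F 0\<bar> + Y) / \<kappa>)"
  have "Y \<ge> 0" unfolding Y_def by (simp add: sum_nonneg)
  then have R: "R \<ge> 0" "\<kappa> / 2 * R\<^sup>2 = \<bar>F 0\<bar> + Y"
    unfolding R_def using \<open>\<kappa> > 0\<close> by simp_all
  have "continuous_on (cball 0 R) F"
    unfolding F_def AL_obj_def divide_inverse by (intro continuous_intros)
  then obtain u where "u \<in> cball 0 R" and umin: "\<And>b. b \<in> cball 0 R \<Longrightarrow> F u \<le> F b"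
    using continuous_attains_inf[OF compact_cball] R(1) by (metis centre_in_cball empty_iff)
  have "F u \<le> F b" for b
  proof (cases "norm b \<le> R")
    case False
    have "F u \<le> F 0" using umin R(1) by simp
    also have "\<dots> \<le> \<kappa> / 2 * R\<^sup>2 - Y" using R(2) by linarith
    also have "\<dots> \<le> \<kappa> / 2 * (norm b)\<^sup>2 - Y"
      using False R(1) \<open>\<kappa> > 0\<close> by (simp add: power_mono)
    also have "\<dots> \<le> F b" by (rule growth)
    finally show ?thesis .
  qed (use umin in simp)
  then have "is_arg_min F (\<lambda>b. True) u" unfolding is_arg_min_def by (simp add: not_less)
  then have "is_arg_min F (\<lambda>b. True) (arg_min F (\<lambda>b. True))"
    unfolding arg_min_def by (rule someI)
  then show ?thesis unfolding beta_AL_def F_def is_arg_min_def by (simp add: not_less)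
qed

text \<open>The basic inequality of the adaptive Lasso: compare the objective at \<open>beta_AL\<close> and
  at \<open>\<beta>\<close>; only the penalty weights of nonzero \<open>\<beta>\<^sub>j\<close> enter, and \<open>\<eta>\<close> bounds them.\<close>
lemma beta_AL_error_le:
  fixes Xn :: "nat \<Rightarrow> real^'p::finite"
  assumes "\<kappa> > 0" and coercive: "\<And>v. \<kappa> * (norm v)\<^sup>2 \<le> (\<Sum>i<n. (Xn i \<bullet> v)\<^sup>2)"
    and lam_nonneg: "\<And>j. lam j \<ge> 0" and lam_le: "\<And>j. lam j \<le> lm" and "\<eta> > 0"
    and LS_large: "\<And>j. \<beta> $ j \<noteq> 0 \<Longrightarrow> \<eta> \<le> \<bar>beta_LS Xn n (resp Xn \<beta> eps \<omega>) $ j\<bar>"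
  shows "\<kappa> * norm (beta_AL Xn n lam (resp Xn \<beta> eps \<omega>) - \<beta>)
           \<le> 2 * norm (Xty Xn n (\<lambda>i. eps i \<omega>)) + 2 * real CARD('p) * lm / \<eta>"
proof -
  define y where "y = resp Xn \<beta> eps \<omega>"
  define b where "b = beta_AL Xn n lam y"
  define d where "d = b - \<beta>"
  define Z where "Z = Xty Xn n (\<lambda>i. eps i \<omega>)"
  define pen where "pen v = (\<Sum>j\<in>UNIV. lam j * \<bar>v $ j\<bar> / \<bar>beta_LS Xn n y $ j\<bar>)" for v
  have lm: "lm \<ge> 0" using lam_nonneg lam_le by (meson order_trans)
  have obj: "AL_obj Xn n lam y v = (\<Sum>i<n. (eps i \<omega>)\<^sup>2) - 2 * (Z \<bullet> (v - \<beta>))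
      + (\<Sum>i<n. (Xn i \<bullet> (v - \<beta>))\<^sup>2) + 2 * pen v" for v
  proof -
    have "(\<Sum>i<n. (y i - Xn i \<bullet> v)\<^sup>2)
        = (\<Sum>i<n. (eps i \<omega>)\<^sup>2 - 2 * (eps i \<omega> * (Xn i \<bullet> (v - \<beta>))) + (Xn i \<bullet> (v - \<beta>))\<^sup>2)"
      unfolding y_def resp_def
      by (intro sum.cong refl) (simp add: inner_diff_right power2_eq_square algebra_simps)
    then show ?thesis
      unfolding AL_obj_def pen_def Z_def Xty_inner
      by (simp add: sum.distrib sum_subtractf sum_distrib_left)
  qed
  have pen_diff: "pen \<beta> - pen b \<le> real CARD('p) * (lm / \<eta>) * norm d"
  proof -
    have "lam j * \<bar>\<beta> $ j\<bar> / \<bar>beta_LS Xn n y $ j\<bar> - lam j * \<bar>b $ j\<bar> / \<bar>beta_LS Xn n y $ j\<bar>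
        \<le> lm / \<eta> * norm d" for j
    proof (cases "\<beta> $ j = 0")
      case True
      have "0 \<le> lam j * \<bar>b $ j\<bar> / \<bar>beta_LS Xn n y $ j\<bar>" using lam_nonneg[of j] by simp
      moreover have "0 \<le> lm / \<eta> * norm d" using lm \<open>\<eta> > 0\<close> by simp
      moreover have "lam j * \<bar>\<beta> $ j\<bar> / \<bar>beta_LS Xn n y $ j\<bar> = 0" using True by simp
      ultimately show ?thesis by linarith
    next
      case False
      have weight: "lam j / \<bar>beta_LS Xn n y $ j\<bar> \<le> lm / \<eta>"
        using LS_large[OF False] \<open>\<eta> > 0\<close> lam_nonneg[of j] lam_le[of j]
        unfolding y_def by (intro frac_le) auto
      have "\<bar>\<beta> $ j\<bar> - \<bar>b $ j\<bar> \<le> norm d"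
        using component_le_norm_cart[of d j] unfolding d_def by simp
      then have "lam j / \<bar>beta_LS Xn n y $ j\<bar> * (\<bar>\<beta> $ j\<bar> - \<bar>b $ j\<bar>)
          \<le> lam j / \<bar>beta_LS Xn n y $ j\<bar> * norm d"
        using lam_nonneg[of j] by (intro mult_left_mono) auto
      also have "\<dots> \<le> lm / \<eta> * norm d" using weight by (rule mult_right_mono) simp
      finally show ?thesis by (simp add: diff_divide_distrib right_diff_distrib)
    qed
    then have "pen \<beta> - pen b \<le> (\<Sum>j\<in>(UNIV::'p set). lm / \<eta> * norm d)"
      unfolding pen_def sum_subtractf[symmetric] by (intro sum_mono)
    then show ?thesis by simp
  qed
  have "AL_obj Xn n lam y b \<le> AL_obj Xn n lam y \<beta>"
    unfolding b_def by (rule AL_obj_beta_AL_le[OF assms(1,2) lam_nonneg])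
  then have "(\<Sum>i<n. (Xn i \<bullet> d)\<^sup>2) \<le> 2 * (Z \<bullet> d) + 2 * (pen \<beta> - pen b)"
    unfolding obj d_def by simp
  also have "\<dots> \<le> 2 * (norm Z * norm d) + 2 * (real CARD('p) * (lm / \<eta>) * norm d)"
    using norm_cauchy_schwarz[of Z d] pen_diff by (intro add_mono mult_left_mono) auto
  also have "\<dots> = (2 * norm Z + 2 * real CARD('p) * lm / \<eta>) * norm d"
    by (simp add: algebra_simps)
  finally have "(\<kappa> * norm d) * norm d \<le> (2 * norm Z + 2 * real CARD('p) * lm / \<eta>) * norm d"
    using coercive[of d] by (simp add: power2_eq_square mult_ac)
  then have "\<kappa> * norm d \<le> 2 * norm Z + 2 * real CARD('p) * lm / \<eta>"
    using lm \<open>\<eta> > 0\<close> by (cases "d = 0") (simp_all add: mult_le_cancel_right)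
  then show ?thesis unfolding d_def b_def y_def Z_def .
qed

lemma rate_bounds:
  assumes "lm \<ge> 0"
  shows "0 \<le> rate n lm" "rate n lm \<le> sqrt (real n)" "rate n lm * lm \<le> real n"
  using assms by (auto simp: rate_def min_def field_simps)

lemma rate_beta_AL_error_le:
  fixes Xn :: "nat \<Rightarrow> real^'p::finite"
  assumes "c > 0" "n > 0" and coercive: "\<And>v. c * real n * (norm v)\<^sup>2 \<le> (\<Sum>i<n. (Xn i \<bullet> v)\<^sup>2)"
    and lam_nonneg: "\<And>j. lam j \<ge> 0" and "\<eta> > 0"
    and noise_small: "norm (Xty Xn n (\<lambda>i. eps i \<omega>)) \<le> T * sqrt (real n)"
    and LS_large: "\<And>j. \<beta> $ j \<noteq> 0 \<Longrightarrow> \<eta> \<le> \<bar>beta_LS Xn n (resp Xn \<beta> eps \<omega>) $ j\<bar>"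
  shows "rate n (lam_max lam) * norm (beta_AL Xn n lam (resp Xn \<beta> eps \<omega>) - \<beta>)
           \<le> 2 * T / c + 2 * real CARD('p) / (c * \<eta>)"
proof -
  define lm where "lm = lam_max lam"
  define r where "r = rate n lm"
  define Z where "Z = norm (Xty Xn n (\<lambda>i. eps i \<omega>))"
  have lam_le: "lam j \<le> lm" for j unfolding lm_def lam_max_def by (intro Max_ge) auto
  then have "lm \<ge> 0" using lam_nonneg order_trans by blast
  note r = rate_bounds[OF this, of n, folded r_def]
  have "c * real n * (r * norm (beta_AL Xn n lam (resp Xn \<beta> eps \<omega>) - \<beta>))
      \<le> r * (2 * Z + 2 * real CARD('p) * lm / \<eta>)"
    using mult_left_mono[OF beta_AL_error_le[OF _ coercive lam_nonneg lam_le \<open>\<eta> > 0\<close> LS_large] r(1)]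
      \<open>c > 0\<close> \<open>n > 0\<close> unfolding Z_def by (simp add: mult_ac)
  also have "\<dots> = 2 * (r * Z) + 2 * real CARD('p) * (r * lm) / \<eta>" by (simp add: algebra_simps)
  also have "\<dots> \<le> 2 * (T * real n) + 2 * real CARD('p) * real n / \<eta>"
  proof (intro add_mono mult_left_mono divide_right_mono)
    have "r * Z \<le> sqrt (real n) * (T * sqrt (real n))"
      using r noise_small unfolding Z_def by (intro mult_mono) auto
    then show "r * Z \<le> T * real n" by (simp add: mult_ac)
  qed (use r \<open>\<eta> > 0\<close> in auto)
  also have "\<dots> = c * real n * (2 * T / c + 2 * real CARD('p) / (c * \<eta>))"
    using \<open>c > 0\<close> \<open>\<eta> > 0\<close> by (simp add: field_simps)
  finally show ?thesis
    using \<open>c > 0\<close> \<open>n > 0\<close> unfolding r_def lm_def by (simp add: mult_le_cancel_left_pos)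
qed

lemma (in prob_space) iid_second_moments:
  fixes eps :: "nat \<Rightarrow> 'a \<Rightarrow> real"
  assumes rv: "\<And>i. eps i \<in> borel_measurable M"
    and indep: "indep_vars (\<lambda>_. borel) eps UNIV"
    and ident: "\<And>i. distr M borel (eps i) = distr M borel (eps 0)"
    and "integrable M (eps 0)" "expectation (eps 0) = 0"
    and "integrable M (\<lambda>\<omega>. (eps 0 \<omega>)\<^sup>2)"
  shows "integrable M (\<lambda>\<omega>. eps i \<omega> * eps k \<omega>)"
    and "expectation (\<lambda>\<omega>. eps i \<omega> * eps k \<omega>)
           = (if i = k then expectation (\<lambda>\<omega>. (eps 0 \<omega>)\<^sup>2) else 0)"
proof -
  have integrable_iff: "integrable M (\<lambda>\<omega>. g (eps l \<omega>)) \<longleftrightarrow> integrable M (\<lambda>\<omega>. g (eps 0 \<omega>))"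
    if "g \<in> borel_measurable borel" for g :: "real \<Rightarrow> real" and l
    using integrable_distr_eq[OF rv[of l] that] integrable_distr_eq[OF rv[of 0] that] ident[of l]
    by simp
  have expectation_eq: "expectation (\<lambda>\<omega>. g (eps l \<omega>)) = expectation (\<lambda>\<omega>. g (eps 0 \<omega>))"
    if "g \<in> borel_measurable borel" for g :: "real \<Rightarrow> real" and l
    using integral_distr[OF rv[of l] that] integral_distr[OF rv[of 0] that] ident[of l] by simp
  have "integrable M (eps l)" "expectation (eps l) = 0"
    "integrable M (\<lambda>\<omega>. (eps l \<omega>)\<^sup>2)"
    "expectation (\<lambda>\<omega>. (eps l \<omega>)\<^sup>2) = expectation (\<lambda>\<omega>. (eps 0 \<omega>)\<^sup>2)" for l
    using integrable_iff[of "\<lambda>x. x" l] expectation_eq[of "\<lambda>x. x" l]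
      integrable_iff[of "\<lambda>x. x\<^sup>2" l] expectation_eq[of "\<lambda>x. x\<^sup>2" l] assms(4-6)
    by simp_all
  moreover have "integrable M (\<lambda>\<omega>. \<Prod>l\<in>{i, k}. eps l \<omega>)"
    "expectation (\<lambda>\<omega>. \<Prod>l\<in>{i, k}. eps l \<omega>) = (\<Prod>l\<in>{i, k}. expectation (eps l))"
    if "i \<noteq> k"
    using indep_vars_subset[OF indep, of "{i, k}"] calculation(1)
    by (auto intro!: indep_vars_integrable indep_vars_lebesgue_integral)
  ultimately show "integrable M (\<lambda>\<omega>. eps i \<omega> * eps k \<omega>)"
    and "expectation (\<lambda>\<omega>. eps i \<omega> * eps k \<omega>)
           = (if i = k then expectation (\<lambda>\<omega>. (eps 0 \<omega>)\<^sup>2) else 0)"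
    by (cases "i = k"; simp add: power2_eq_square)+
qed

lemma (in prob_space) expectation_square_sum_uncorrelated:
  fixes eps :: "nat \<Rightarrow> 'a \<Rightarrow> real"
  assumes int: "\<And>i k. integrable M (\<lambda>\<omega>. eps i \<omega> * eps k \<omega>)"
    and E: "\<And>i k. expectation (\<lambda>\<omega>. eps i \<omega> * eps k \<omega>) = (if i = k then s2 else 0)"
  shows "integrable M (\<lambda>\<omega>. (\<Sum>i<n. a i * eps i \<omega>)\<^sup>2)"
    and "expectation (\<lambda>\<omega>. (\<Sum>i<n. a i * eps i \<omega>)\<^sup>2) = s2 * (\<Sum>i<n. (a i)\<^sup>2)"
proof -
  have eq: "(\<lambda>\<omega>. (\<Sum>i<n. a i * eps i \<omega>)\<^sup>2)
      = (\<lambda>\<omega>. \<Sum>i<n. \<Sum>k<n. (a i * a k) * (eps i \<omega> * eps k \<omega>))"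
    by (simp add: power2_eq_square sum_product mult_ac)
  show "integrable M (\<lambda>\<omega>. (\<Sum>i<n. a i * eps i \<omega>)\<^sup>2)"
    unfolding eq using int by auto
  have "expectation (\<lambda>\<omega>. (\<Sum>i<n. a i * eps i \<omega>)\<^sup>2)
      = (\<Sum>i<n. \<Sum>k<n. (a i * a k) * (if i = k then s2 else 0))"
    unfolding eq using int by (simp add: integral_sum E)
  also have "\<dots> = (\<Sum>i<n. (a i * a i) * s2)"
    by (intro sum.cong refl) (simp add: if_distrib sum.delta cong: if_cong)
  finally show "expectation (\<lambda>\<omega>. (\<Sum>i<n. a i * eps i \<omega>)\<^sup>2) = s2 * (\<Sum>i<n. (a i)\<^sup>2)"
    by (simp add: power2_eq_square sum_distrib_left mult_ac)
qed

lemma (in prob_space) prob_norm_Xty_ge: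
  fixes eps :: "nat \<Rightarrow> 'a \<Rightarrow> real" and Xn :: "nat \<Rightarrow> real^'p::finite"
  assumes int: "\<And>i k. integrable M (\<lambda>\<omega>. eps i \<omega> * eps k \<omega>)"
    and E: "\<And>i k. expectation (\<lambda>\<omega>. eps i \<omega> * eps k \<omega>) = (if i = k then s2 else 0)"
    and "t > 0"
  shows "prob {\<omega>\<in>space M. t \<le> norm (Xty Xn n (\<lambda>i. eps i \<omega>))}
           \<le> s2 * (\<Sum>j\<in>UNIV. \<Sum>i<n. (Xn i $ j)\<^sup>2) / t\<^sup>2"
proof -
  define S where "S \<omega> = (\<Sum>j\<in>UNIV. (\<Sum>i<n. Xn i $ j * eps i \<omega>)\<^sup>2)" for \<omega>
  have "{\<omega>\<in>space M. t \<le> norm (Xty Xn n (\<lambda>i. eps i \<omega>))} = {\<omega>\<in>space M. t\<^sup>2 \<le> S \<omega>}"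
    using \<open>t > 0\<close> unfolding S_def norm_Xty_power2[symmetric]
    by (auto intro: power_mono power2_le_imp_le)
  moreover have "integrable M S"
    unfolding S_def using expectation_square_sum_uncorrelated(1)[OF int E] by auto
  moreover have "expectation S = s2 * (\<Sum>j\<in>UNIV. \<Sum>i<n. (Xn i $ j)\<^sup>2)"
    unfolding S_def using expectation_square_sum_uncorrelated[OF int E]
    by (simp add: integral_sum sum_distrib_left)
  moreover have "0 \<le> S \<omega>" for \<omega> unfolding S_def by (simp add: sum_nonneg)
  ultimately show ?thesis
    using integral_Markov_inequality_measure[of M S "space M" "t\<^sup>2"] \<open>t > 0\<close> by simp
qed

lemma (in prob_space) ex_pos_prob_exists_abs_less_le:
  fixes L :: "'p::finite \<Rightarrow> 'a \<Rightarrow> real"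
  assumes meas: "\<And>j. L j \<in> borel_measurable M"
    and nonzero: "\<And>j. prob {\<omega>\<in>space M. L j \<omega> = 0} = 0" and "\<delta> > 0"
  shows "\<exists>\<eta>>0. prob {\<omega>\<in>space M. \<exists>j. \<bar>L j \<omega>\<bar> < \<eta>} \<le> \<delta>"
proof -
  define S where "S j k = {\<omega>\<in>space M. \<bar>L j \<omega>\<bar> < 1 / Suc k}" for j k
  have S_sets: "S j k \<in> sets M" for j k unfolding S_def using meas[of j] by measurable
  have decseq: "decseq (S j)" for j
    unfolding S_def decseq_def by (auto simp: frac_le less_le_trans)
  have Inter: "(\<Inter>k. S j k) = {\<omega>\<in>space M. L j \<omega> = 0}" for j
  proof -
    have "L j \<omega> = 0" if "\<forall>k. \<bar>L j \<omega>\<bar> < 1 / Suc k" for \<omega>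
    proof (rule ccontr)
      assume "L j \<omega> \<noteq> 0"
      then have "\<bar>L j \<omega>\<bar> > 0" by simp
      then obtain k where "inverse (real (Suc k)) < \<bar>L j \<omega>\<bar>" using reals_Archimedean by blast
      with that show False by (auto simp: inverse_eq_divide not_less_iff_gr_or_eq dest: spec[of _ k])
    qed
    then show ?thesis unfolding S_def by auto
  qed
  have "(\<lambda>k. prob (S j k)) \<longlonglongrightarrow> 0" for j
    using finite_Lim_measure_decseq[of "S j", OF _ decseq] S_sets nonzero[of j]
    unfolding Inter by auto
  then have "eventually (\<lambda>k. prob (S j k) < \<delta> / CARD('p)) sequentially" for j
    using \<open>\<delta> > 0\<close> by (intro order_tendstoD(2)[of _ 0]) simp_all
  then have "eventually (\<lambda>k. \<forall>j. prob (S j k) < \<delta> / CARD('p)) sequentially"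
    by (rule eventually_all_finite)
  then obtain k where k: "\<And>j. prob (S j k) < \<delta> / CARD('p)"
    unfolding eventually_sequentially by blast
  have "prob {\<omega>\<in>space M. \<exists>j. \<bar>L j \<omega>\<bar> < 1 / Suc k} = prob (\<Union>j. S j k)"
    unfolding S_def by (rule arg_cong[where f = prob]) auto
  also have "\<dots> \<le> (\<Sum>j\<in>UNIV. prob (S j k))"
    using finite_measure_subadditive_finite[of UNIV "\<lambda>j. S j k"] S_sets by auto
  also have "\<dots> \<le> (\<Sum>j\<in>(UNIV::'p set). \<delta> / CARD('p))"
    using k by (intro sum_mono less_imp_le)
  also have "\<dots> = \<delta>" by simp
  finally show ?thesis by (intro exI[of _ "1 / Suc k"]) simp
qed

lemma ex_pos_le_all_below:
  fixes P :: "nat \<Rightarrow> real \<Rightarrow> bool"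
  assumes "\<And>n. n < N \<Longrightarrow> \<exists>\<eta>>0. P n \<eta>"
    and mono: "\<And>n \<eta> \<eta>'. P n \<eta> \<Longrightarrow> 0 < \<eta>' \<Longrightarrow> \<eta>' \<le> \<eta> \<Longrightarrow> P n \<eta>'"
    and "\<eta>\<^sub>0 > 0"
  shows "\<exists>\<eta>>0. \<eta> \<le> \<eta>\<^sub>0 \<and> (\<forall>n<N. P n \<eta>)"
  using assms(1)
proof (induction N)
  case 0
  with \<open>\<eta>\<^sub>0 > 0\<close> show ?case by auto
next
  case (Suc N)
  then obtain \<eta> where \<eta>: "\<eta> > 0" "\<eta> \<le> \<eta>\<^sub>0" "\<forall>n<N. P n \<eta>" by auto
  obtain \<eta>' where \<eta>': "\<eta>' > 0" "P N \<eta>'" using Suc.prems by blast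
  have "\<forall>n<Suc N. P n (min \<eta> \<eta>')"
    using \<eta> \<eta>' mono by (auto simp: less_Suc_eq)
  with \<eta> \<eta>' show ?case by (intro exI[of _ "min \<eta> \<eta>'"]) auto
qed

locale linear_regression_model = prob_space M
  for M :: "'a measure" +
  fixes eps :: "nat \<Rightarrow> 'a \<Rightarrow> real" and X :: "nat \<Rightarrow> nat \<Rightarrow> real^'p::finite" and C :: "real^'p^'p"
  assumes eps_measurable: "\<And>i. eps i \<in> borel_measurable M"
    and eps_indep: "indep_vars (\<lambda>_. borel) eps UNIV"
    and eps_ident: "\<And>i. distr M borel (eps i) = distr M borel (eps 0)"
    and eps_integrable: "integrable M (eps 0)"
    and eps_mean_zero: "expectation (eps 0) = 0"
    and eps_square_integrable: "integrable M (\<lambda>\<omega>. (eps 0 \<omega>)\<^sup>2)"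
    and full_rank: "\<And>n b. n \<ge> CARD('p) \<Longrightarrow> (\<forall>i<n. X n i \<bullet> b = 0) \<Longrightarrow> b = 0"
    and gram_limit: "(\<lambda>n. (1 / real n) *\<^sub>R gram (X n) n) \<longlonglongrightarrow> C"
    and limit_pos_def: "\<And>v. v \<noteq> 0 \<Longrightarrow> v \<bullet> (C *v v) > 0"
    and LS_nonzero: "\<And>b n j. n \<ge> CARD('p) \<Longrightarrow>
        prob {\<omega> \<in> space M. beta_LS (X n) n (resp (X n) b eps \<omega>) $ j = 0} = 0"
begin

lemma gram_uniformly_coercive:
  "\<exists>c>0. \<forall>n\<ge>CARD('p). \<forall>v. c * real n * (norm v)\<^sup>2 \<le> (\<Sum>i<n. (X n i \<bullet> v)\<^sup>2)"
  using full_rank gram_limit limit_pos_def by (rule design_uniformly_coercive)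

lemma card_le_imp_pos: "n \<ge> CARD('p) \<Longrightarrow> n > 0"
  using zero_less_card_finite[where 'a='p] by linarith

lemma beta_LS_measurable:
  assumes "n \<ge> CARD('p)"
  shows "(\<lambda>\<omega>. beta_LS (X n) n (resp (X n) \<beta> eps \<omega>) $ j) \<in> borel_measurable M"
proof -
  obtain c where "c > 0" "\<And>v. c * real n * (norm v)\<^sup>2 \<le> (\<Sum>i<n. (X n i \<bullet> v)\<^sup>2)"
    using gram_uniformly_coercive assms by blast
  then have "(\<lambda>\<omega>. beta_LS (X n) n (resp (X n) \<beta> eps \<omega>) $ j)
      = (\<lambda>\<omega>. \<beta> $ j + (\<Sum>k\<in>UNIV. matrix_inv (gram (X n) n) $ j $ k * (\<Sum>i<n. X n i $ k * eps i \<omega>)))"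
    using card_le_imp_pos[OF assms]
    by (subst beta_LS_resp[where \<kappa> = "c * real n"]) (simp_all add: matrix_vector_mult_def Xty_def)
  also have "\<dots> \<in> borel_measurable M" using eps_measurable by measurable
  finally show ?thesis .
qed

lemma norm_noise_measurable: "(\<lambda>\<omega>. norm (Xty (X n) n (\<lambda>i. eps i \<omega>))) \<in> borel_measurable M"
proof -
  have "(\<lambda>\<omega>. norm (Xty (X n) n (\<lambda>i. eps i \<omega>)))
      = (\<lambda>\<omega>. sqrt (\<Sum>j\<in>UNIV. (\<Sum>i<n. X n i $ j * eps i \<omega>)\<^sup>2))"
    unfolding norm_Xty_power2[symmetric] by simp
  also have "\<dots> \<in> borel_measurable M" using eps_measurable by measurable
  finally show ?thesis .
qed

lemma noise_bounded_in_probability: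
  assumes "\<delta> > 0"
  shows "\<exists>T>0. \<forall>n\<ge>1. prob {\<omega>\<in>space M. T * sqrt (real n) \<le> norm (Xty (X n) n (\<lambda>i. eps i \<omega>))} \<le> \<delta>"
proof -
  define s2 where "s2 = expectation (\<lambda>\<omega>. (eps 0 \<omega>)\<^sup>2)"
  note moments = iid_second_moments[OF eps_measurable eps_indep eps_ident eps_integrable
      eps_mean_zero eps_square_integrable, folded s2_def]
  obtain B where B: "B > 0" "\<And>n. n \<ge> 1 \<Longrightarrow> (\<Sum>j\<in>UNIV. \<Sum>i<n. (X n i $ j)\<^sup>2) \<le> B * real n"
    using design_sum_squares_bounded[OF gram_limit] by blast
  have "s2 \<ge> 0" unfolding s2_def by (intro integral_nonneg_AE) auto
  define T where "T = sqrt (s2 * B / \<delta> + 1)"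
  have T: "T > 0" "T\<^sup>2 = s2 * B / \<delta> + 1"
    unfolding T_def using \<open>s2 \<ge> 0\<close> B(1) \<open>\<delta> > 0\<close> by (simp_all add: add_nonneg_pos)
  have "prob {\<omega>\<in>space M. T * sqrt (real n) \<le> norm (Xty (X n) n (\<lambda>i. eps i \<omega>))} \<le> \<delta>"
    if "n \<ge> 1" for n
  proof -
    have "prob {\<omega>\<in>space M. T * sqrt (real n) \<le> norm (Xty (X n) n (\<lambda>i. eps i \<omega>))}
        \<le> s2 * (\<Sum>j\<in>UNIV. \<Sum>i<n. (X n i $ j)\<^sup>2) / (T * sqrt (real n))\<^sup>2"
      using T(1) that by (intro prob_norm_Xty_ge moments) simp
    also have "\<dots> = s2 * (\<Sum>j\<in>UNIV. \<Sum>i<n. (X n i $ j)\<^sup>2) / (T\<^sup>2 * real n)"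
      by (simp add: power_mult_distrib)
    also have "\<dots> \<le> s2 * (B * real n) / (T\<^sup>2 * real n)"
      using B(2)[OF that] \<open>s2 \<ge> 0\<close> by (intro divide_right_mono mult_left_mono) simp_all
    also have "\<dots> = s2 * B / (s2 * B / \<delta> + 1)" using that by (simp add: T(2))
    also have "\<dots> \<le> \<delta>"
    proof -
      have "s2 * B / \<delta> + 1 > 0" using \<open>s2 \<ge> 0\<close> B(1) \<open>\<delta> > 0\<close> by (simp add: add_nonneg_pos)
      moreover have "s2 * B \<le> \<delta> * (s2 * B / \<delta> + 1)" using \<open>\<delta> > 0\<close> by (simp add: distrib_left)
      ultimately show ?thesis by (simp add: divide_le_eq)
    qed
    finally show ?thesis .
  qed
  with T(1) show ?thesis by blast
qed

lemma beta_LS_bounded_away_from_zero: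
  assumes "\<delta> > 0" "c > 0" "T > 0"
    and coercive: "\<And>n v. n \<ge> CARD('p) \<Longrightarrow> c * real n * (norm v)\<^sup>2 \<le> (\<Sum>i<n. (X n i \<bullet> v)\<^sup>2)"
  shows "\<exists>\<eta>>0. \<forall>n\<ge>CARD('p). prob {\<omega>\<in>space M. norm (Xty (X n) n (\<lambda>i. eps i \<omega>)) < T * sqrt (real n)
           \<and> (\<exists>j. \<beta> $ j \<noteq> 0 \<and> \<bar>beta_LS (X n) n (resp (X n) \<beta> eps \<omega>) $ j\<bar> < \<eta>)} \<le> \<delta>"
proof -
  define L where "L n j \<omega> = beta_LS (X n) n (resp (X n) \<beta> eps \<omega>) $ j" for n j \<omega>
  define small where "small n \<eta> = {\<omega>\<in>space M. \<exists>j. \<bar>L n j \<omega>\<bar> < \<eta>}" for n \<eta>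
  have small_sets: "small n \<eta> \<in> sets M" if "n \<ge> CARD('p)" for n \<eta>
    unfolding small_def L_def using beta_LS_measurable[OF that] by measurable
  define \<eta>\<^sub>0 where "\<eta>\<^sub>0 = Min (insert 1 ((\<lambda>j. \<bar>\<beta> $ j\<bar> / 2) ` {j. \<beta> $ j \<noteq> 0}))"
  have "\<eta>\<^sub>0 > 0" unfolding \<eta>\<^sub>0_def by (subst Min_gr_iff) auto
  have \<eta>\<^sub>0_le: "\<eta>\<^sub>0 \<le> \<bar>\<beta> $ j\<bar> / 2" if "\<beta> $ j \<noteq> 0" for j
    unfolding \<eta>\<^sub>0_def using that by (intro Min_le) auto
  define N where "N = nat \<lceil>(T / (c * \<eta>\<^sub>0))\<^sup>2\<rceil>"
  have "\<exists>\<eta>>0. \<eta> \<le> \<eta>\<^sub>0 \<and> (\<forall>n<N. n \<ge> CARD('p) \<longrightarrow> prob (small n \<eta>) \<le> \<delta>)"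
  proof (rule ex_pos_le_all_below[OF _ _ \<open>\<eta>\<^sub>0 > 0\<close>])
    show "\<exists>\<eta>>0. n \<ge> CARD('p) \<longrightarrow> prob (small n \<eta>) \<le> \<delta>" for n
      using ex_pos_prob_exists_abs_less_le[OF _ _ \<open>\<delta> > 0\<close>, of "L n"]
        beta_LS_measurable LS_nonzero zero_less_one
      unfolding small_def L_def by blast
    show "n \<ge> CARD('p) \<longrightarrow> prob (small n \<eta>') \<le> \<delta>"
      if "n \<ge> CARD('p) \<longrightarrow> prob (small n \<eta>) \<le> \<delta>" "\<eta>' \<le> \<eta>" for n \<eta> \<eta>'
    proof
      assume n: "n \<ge> CARD('p)"
      have "prob (small n \<eta>') \<le> prob (small n \<eta>)"
        using \<open>\<eta>' \<le> \<eta>\<close> by (intro finite_measure_mono[OF _ small_sets[OF n]])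
          (unfold small_def, blast intro: less_le_trans)
      with that(1) n show "prob (small n \<eta>') \<le> \<delta>" by linarith
    qed
  qed
  then obtain \<eta> where \<eta>: "\<eta> > 0" "\<eta> \<le> \<eta>\<^sub>0" "\<And>n. n < N \<Longrightarrow> n \<ge> CARD('p) \<Longrightarrow> prob (small n \<eta>) \<le> \<delta>"
    by blast
  have "prob {\<omega>\<in>space M. norm (Xty (X n) n (\<lambda>i. eps i \<omega>)) < T * sqrt (real n)
           \<and> (\<exists>j. \<beta> $ j \<noteq> 0 \<and> \<bar>L n j \<omega>\<bar> < \<eta>)} \<le> \<delta>" if n: "n \<ge> CARD('p)" for n
  proof (cases "n < N")
    case True
    have "prob {\<omega>\<in>space M. norm (Xty (X n) n (\<lambda>i. eps i \<omega>)) < T * sqrt (real n)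
        \<and> (\<exists>j. \<beta> $ j \<noteq> 0 \<and> \<bar>L n j \<omega>\<bar> < \<eta>)} \<le> prob (small n \<eta>)"
      by (rule finite_measure_mono[OF _ small_sets[OF n]]) (auto simp: small_def)
    with \<eta>(3)[OF True n] show ?thesis by linarith
  next
    case False
    have "\<eta> \<le> \<bar>L n j \<omega>\<bar>"
      if "norm (Xty (X n) n (\<lambda>i. eps i \<omega>)) < T * sqrt (real n)" "\<beta> $ j \<noteq> 0" for j \<omega>
    proof -
      have "(T / (c * \<eta>\<^sub>0))\<^sup>2 \<le> real n"
        using False real_nat_ceiling_ge[of "(T / (c * \<eta>\<^sub>0))\<^sup>2"] unfolding N_def by linarith
      then have "norm (beta_LS (X n) n (resp (X n) \<beta> eps \<omega>) - \<beta>) \<le> \<eta>\<^sub>0"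
        using \<open>c > 0\<close> card_le_imp_pos[OF n] \<open>\<eta>\<^sub>0 > 0\<close> coercive[OF n] that(1)
        by (intro beta_LS_error_le_if_noise_le) auto
      then have "\<bar>L n j \<omega> - \<beta> $ j\<bar> \<le> \<eta>\<^sub>0"
        unfolding L_def using component_le_norm_cart order_trans by fastforce
      then show ?thesis using \<eta>(2) \<eta>\<^sub>0_le[OF that(2)] by linarith
    qed
    then have empty: "{\<omega>\<in>space M. norm (Xty (X n) n (\<lambda>i. eps i \<omega>)) < T * sqrt (real n)
        \<and> (\<exists>j. \<beta> $ j \<noteq> 0 \<and> \<bar>L n j \<omega>\<bar> < \<eta>)} = {}"
      by (auto simp: not_less) (meson not_le)
    show ?thesis unfolding empty using \<open>\<delta> > 0\<close> by simp
  qed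
  with \<eta>(1) show ?thesis unfolding L_def by blast
qed

lemma prob_rate_beta_AL_error_gt_le:
  assumes n: "n \<ge> CARD('p)" and "c > 0" and "\<eta> > 0"
    and coercive: "\<And>v. c * real n * (norm v)\<^sup>2 \<le> (\<Sum>i<n. (X n i \<bullet> v)\<^sup>2)"
    and lam_nonneg: "\<And>j. lam j \<ge> 0"
  shows "prob {\<omega>\<in>space M. rate n (lam_max lam) * norm (beta_AL (X n) n lam (resp (X n) \<beta> eps \<omega>) - \<beta>)
             > 2 * T / c + 2 * real CARD('p) / (c * \<eta>)}
         \<le> prob {\<omega>\<in>space M. T * sqrt (real n) \<le> norm (Xty (X n) n (\<lambda>i. eps i \<omega>))}
           + prob {\<omega>\<in>space M. norm (Xty (X n) n (\<lambda>i. eps i \<omega>)) < T * sqrt (real n)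
               \<and> (\<exists>j. \<beta> $ j \<noteq> 0 \<and> \<bar>beta_LS (X n) n (resp (X n) \<beta> eps \<omega>) $ j\<bar> < \<eta>)}"
    (is "prob ?E \<le> prob ?A\<^sub>1 + prob ?A\<^sub>2")
proof -
  have sets: "?A\<^sub>1 \<in> sets M" "?A\<^sub>2 \<in> sets M"
    using norm_noise_measurable beta_LS_measurable[OF n] by measurable
  have "?E \<subseteq> ?A\<^sub>1 \<union> ?A\<^sub>2"
  proof (rule subsetI, rule ccontr)
    fix \<omega> assume "\<omega> \<in> ?E" "\<omega> \<notin> ?A\<^sub>1 \<union> ?A\<^sub>2"
    moreover from this have "rate n (lam_max lam) * norm (beta_AL (X n) n lam (resp (X n) \<beta> eps \<omega>) - \<beta>)
        \<le> 2 * T / c + 2 * real CARD('p) / (c * \<eta>)"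
      using \<open>c > 0\<close> card_le_imp_pos[OF n] coercive lam_nonneg \<open>\<eta> > 0\<close>
      by (intro rate_beta_AL_error_le) auto
    ultimately show False by simp
  qed
  then have "prob ?E \<le> prob (?A\<^sub>1 \<union> ?A\<^sub>2)" by (rule finite_measure_mono) (use sets in auto)
  also have "\<dots> \<le> prob ?A\<^sub>1 + prob ?A\<^sub>2" using sets by (rule measure_Un_le)
  finally show ?thesis .
qed

lemma beta_AL_rate_bounded_in_probability:
  assumes lam_nonneg: "\<And>n j. lam n j \<ge> 0"
  shows "\<forall>\<delta>>0. \<exists>K::real. \<forall>n\<ge>CARD('p). prob {\<omega> \<in> space M.
     rate n (lam_max (lam n)) * norm (beta_AL (X n) n (lam n) (resp (X n) \<beta> eps \<omega>) - \<beta>) > K} \<le> \<delta>"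
proof (intro allI impI)
  fix \<delta> :: real
  assume "\<delta> > 0"
  obtain c where c: "c > 0" "\<And>n v. n \<ge> CARD('p) \<Longrightarrow> c * real n * (norm v)\<^sup>2 \<le> (\<Sum>i<n. (X n i \<bullet> v)\<^sup>2)"
    using gram_uniformly_coercive by blast
  obtain T where T: "T > 0"
    "\<And>n. n \<ge> 1 \<Longrightarrow> prob {\<omega>\<in>space M. T * sqrt (real n) \<le> norm (Xty (X n) n (\<lambda>i. eps i \<omega>))} \<le> \<delta> / 2"
    using noise_bounded_in_probability[of "\<delta> / 2"] \<open>\<delta> > 0\<close> by auto
  obtain \<eta> where \<eta>: "\<eta> > 0" "\<And>n. n \<ge> CARD('p) \<Longrightarrow>
      prob {\<omega>\<in>space M. norm (Xty (X n) n (\<lambda>i. eps i \<omega>)) < T * sqrt (real n)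
        \<and> (\<exists>j. \<beta> $ j \<noteq> 0 \<and> \<bar>beta_LS (X n) n (resp (X n) \<beta> eps \<omega>) $ j\<bar> < \<eta>)} \<le> \<delta> / 2"
    using beta_LS_bounded_away_from_zero[of "\<delta> / 2" c T \<beta>] \<open>\<delta> > 0\<close> c T(1) by auto
  have "prob {\<omega> \<in> space M. rate n (lam_max (lam n))
      * norm (beta_AL (X n) n (lam n) (resp (X n) \<beta> eps \<omega>) - \<beta>) > 2 * T / c + 2 * real CARD('p) / (c * \<eta>)}
      \<le> \<delta>" if n: "n \<ge> CARD('p)" for n
    using prob_rate_beta_AL_error_gt_le[where lam = "lam n" and T = T and \<beta> = \<beta>, OF n c(1) \<eta>(1) c(2)[OF n] lam_nonneg]
      T(2)[of n] \<eta>(2)[OF n] card_le_imp_pos[OF n] by simp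
  then show "\<exists>K. \<forall>n\<ge>CARD('p). prob {\<omega> \<in> space M.
      rate n (lam_max (lam n)) * norm (beta_AL (X n) n (lam n) (resp (X n) \<beta> eps \<omega>) - \<beta>) > K} \<le> \<delta>"
    by blast
qed

end
theorem proposition1:
  fixes M :: "'a measure"
    and eps :: "nat \<Rightarrow> 'a \<Rightarrow> real"
    and X :: "nat \<Rightarrow> nat \<Rightarrow> real^'p::finite"
    and lam :: "nat \<Rightarrow> 'p \<Rightarrow> real"
    and C :: "real^'p^'p"
    and beta :: "real^'p"
  assumes "prob_space M"
    and rv: "\<And>i. eps i \<in> borel_measurable M"
    and indep: "prob_space.indep_vars M (\<lambda>_. borel) eps UNIV"
    and ident: "\<And>i. distr M borel (eps i) = distr M borel (eps 0)"
    and mean0: "integrable M (eps 0)" "prob_space.expectation M (eps 0) = 0"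
    and finvar: "integrable M (\<lambda>\<omega>. (eps 0 \<omega>)\<^sup>2)"
    and varpos: "prob_space.variance M (eps 0) > 0"
    and fullrank: "\<And>n b. n \<ge> CARD('p) \<Longrightarrow> (\<forall>i<n. X n i \<bullet> b = 0) \<Longrightarrow> b = 0"
    and limC: "(\<lambda>n. (1 / real n) *\<^sub>R gram (X n) n) \<longlonglongrightarrow> C"
    and Cpd: "\<And>v. v \<noteq> 0 \<Longrightarrow> v \<bullet> (C *v v) > 0"
    and lam_nonneg: "\<And>n j. lam n j \<ge> 0"
    and LS_nonzero: "\<And>b n j. n \<ge> CARD('p) \<Longrightarrow>
        prob_space.prob M {\<omega> \<in> space M. beta_LS (X n) n (resp (X n) b eps \<omega>) $ j = 0} = 0"
  shows "\<forall>\<delta>>0. \<exists>K::real. \<forall>n\<ge>CARD('p).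
     prob_space.prob M {\<omega> \<in> space M.
        rate n (lam_max (lam n)) * norm (beta_AL (X n) n (lam n) (resp (X n) beta eps \<omega>) - beta) > K}
       \<le> \<delta>"
proof -
  interpret linear_regression_model M eps X C
    using assms(1) rv indep ident mean0 finvar fullrank limC Cpd LS_nonzero
    by (simp add: linear_regression_model_def linear_regression_model_axioms_def)
  show ?thesis using lam_nonneg by (rule beta_AL_rate_bounded_in_probability)
qed

end
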